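(* Let $X$ be a complex Banach space and let $(Q,V)$ be a bounded symmetric pair of $X$. Let $V_0\subset V^Q$ be a closed linear subspace. Let $h\in\{1,-1\}$ and $c\ge0$. Let $\alpha$ be a closed linear subspace of $V$ that is positive semi-definite with respect to $hQ$, and let $\beta$ be a closed linear subspace of $V$ that is negative definite with respect to $hQ$, with $V_0=\beta^{Q|_\beta}$ and $\gamma(Q|_\beta)>0$. Assume that $V=\alpha\oplus\beta$ is a $Q$-orthogonal direct sum decomposition. Then there is $\varepsilon>0$ such that for every bounded symmetric pair $(R,W)$ of $X$ and every closed linear subspace $W_0\subset W^R$ with $\hat\delta(V,W)<\varepsilon$, $\delta(V_0,W_0)<\varepsilon$ and $\delta_c(Q,R)<\varepsilon$, we have $$m^+(hR)+\dim W^R/W_0\le \dim\alpha.$$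
   Context: A bounded symmetric pair $(Q,V)$ consists of a closed subspace $V\subset X$ and a Hermitian sesquilinear form $Q\colon V\times V\to\mathbb{C}$ with $\sup_{x,y\in V\setminus\{0\}}|Q(x,y)|/(\|x\|\|y\|)<\infty$. For a subset $\lambda\subset V$, $\lambda^Q:=\{u\in V: Q(u,v)=0\ \forall v\in\lambda\}$; in particular $V^Q$ is the radical of $Q$, and for a subspace $\beta\subset V$, $\beta^{Q|_\beta}:=\{u\in\beta: Q(u,v)=0\ \forall v\in\beta\}$. For a bounded semi-definite form $Q$ on $V$, $\gamma(Q):=\inf_{x\in V\setminus V^Q}|Q(x,x)|/\operatorname{dist}(x,V^Q)^2$ (and $0$ if $V=\{0\}$). $m^+(hR)$ is the supremum of the dimensions of subspaces of $W$ on which $hR$ is positive definite. $Q$-orthogonal means $Q(a,b)=0$ for $a\in\alpha$, $b\in\beta$. For linear subspaces $A,B$: $\delta(A,B):=\sup_{u\in A,\|u\|=1}\operatorname{dist}(u,B)$ ($0$ if $A=\{0\}$), $\hat\delta(A,B):=\max\{\delta(A,B),\delta(B,A)\}$. For bounded symmetric pairs $(Q,V)$, $(R,W)$ and $c\ge0$, $\delta_c(Q,R)$ is the infimum of $\delta\ge0$ such that $|Q(x,y)-R(u,v)|\le\delta(\|u\|+\|x\|)(\|v\|+\|y\|)+c\big((\|u\|+\|x\|)\|v-y\|+\|u-x\|(\|v\|+\|y\|)\big)$ for all $x,y\in V$, $u,v\in W$. *)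

theory Defs
  imports "HOL-Analysis.Analysis" "HOL-Library.Extended_Nat"
begin

text \<open>HOL-Analysis has no complex vector spaces, so we introduce the class of complex
normed vector spaces as real normed vector spaces with a compatible complex scalar
multiplication, and complex Banach spaces as complete ones.\<close>

class cvector = real_vector +
  fixes scaleC :: "complex \<Rightarrow> 'a \<Rightarrow> 'a"
  assumes scaleC_add_right: "scaleC a (x + y) = scaleC a x + scaleC a y"
    and scaleC_add_left: "scaleC (a + b) x = scaleC a x + scaleC b x"
    and scaleC_scaleC: "scaleC a (scaleC b x) = scaleC (a * b) x"
    and scaleC_one: "scaleC 1 x = x"
    and scaleR_scaleC: "scaleR r x = scaleC (complex_of_real r) x"

class cnormed_vector = cvector + real_normed_vector +
  assumes norm_scaleC: "norm (scaleC a x) = cmod a * norm x"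

class cbanach = cnormed_vector + banach

definition csubspace :: "'a::cvector set \<Rightarrow> bool" where
  "csubspace S \<longleftrightarrow> 0 \<in> S \<and> (\<forall>x\<in>S. \<forall>y\<in>S. x + y \<in> S) \<and> (\<forall>a. \<forall>x\<in>S. scaleC a x \<in> S)"

definition closed_csubspace :: "'a::cnormed_vector set \<Rightarrow> bool" where
  "closed_csubspace S \<longleftrightarrow> csubspace S \<and> closed S"

text \<open>A finite set F is linearly independent modulo B (i.e. its image in the quotient
space is a linearly independent family of distinct vectors).\<close>
definition cindep_mod :: "'a::cvector set \<Rightarrow> 'a set \<Rightarrow> bool" where
  "cindep_mod B F \<longleftrightarrow> (\<forall>c. (\<Sum>x\<in>F. scaleC (c x) x) \<in> B \<longrightarrow> (\<forall>x\<in>F. c x = 0))"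

definition cdim_quot :: "'a::cvector set \<Rightarrow> 'a set \<Rightarrow> enat" where
  "cdim_quot A B = Sup {enat (card F) | F. finite F \<and> F \<subseteq> A \<and> cindep_mod B F}"

definition cdim :: "'a::cvector set \<Rightarrow> enat" where
  "cdim A = cdim_quot A {0}"

definition bounded_symmetric_pair :: "('a::cbanach \<Rightarrow> 'a \<Rightarrow> complex) \<Rightarrow> 'a set \<Rightarrow> bool" where
  "bounded_symmetric_pair Q V \<longleftrightarrow>
     closed_csubspace V \<and>
     (\<forall>x\<in>V. \<forall>y\<in>V. \<forall>z\<in>V. Q (x + y) z = Q x z + Q y z) \<and>
     (\<forall>a. \<forall>x\<in>V. \<forall>y\<in>V. Q (scaleC a x) y = a * Q x y) \<and>
     (\<forall>x\<in>V. \<forall>y\<in>V. Q x y = cnj (Q y x)) \<and>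
     (\<exists>C. \<forall>x\<in>V. \<forall>y\<in>V. cmod (Q x y) \<le> C * norm x * norm y)"

definition Qorth :: "('a \<Rightarrow> 'a \<Rightarrow> complex) \<Rightarrow> 'a set \<Rightarrow> 'a set \<Rightarrow> 'a set" where
  "Qorth Q V lam = {u \<in> V. \<forall>v\<in>lam. Q u v = 0}"

definition radical :: "('a \<Rightarrow> 'a \<Rightarrow> complex) \<Rightarrow> 'a set \<Rightarrow> 'a set" where
  "radical Q V = Qorth Q V V"

text \<open>gamma(Q) for a (semi-definite) form Q on V; infimum of the empty set is +\<infinity>.\<close>
definition gamma :: "('a::real_normed_vector \<Rightarrow> 'a \<Rightarrow> complex) \<Rightarrow> 'a set \<Rightarrow> ereal" where
  "gamma Q V = (if V = {0} then 0
     else Inf {ereal (cmod (Q x x) / (infdist x (radical Q V))\<^sup>2) | x. x \<in> V - radical Q V})"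

definition m_plus :: "real \<Rightarrow> ('a::cvector \<Rightarrow> 'a \<Rightarrow> complex) \<Rightarrow> 'a set \<Rightarrow> enat" where
  "m_plus h R W = Sup {cdim S | S. csubspace S \<and> S \<subseteq> W \<and> (\<forall>x\<in>S - {0}. h * Re (R x x) > 0)}"

definition gap :: "'a::real_normed_vector set \<Rightarrow> 'a set \<Rightarrow> real" where
  "gap A B = (if A \<subseteq> {0} then 0 else Sup {infdist u B | u. u \<in> A \<and> norm u = 1})"

definition gap_hat :: "'a::real_normed_vector set \<Rightarrow> 'a set \<Rightarrow> real" where
  "gap_hat A B = max (gap A B) (gap B A)"

definition delta_c :: "real \<Rightarrow> ('a::real_normed_vector \<Rightarrow> 'a \<Rightarrow> complex) \<Rightarrow> 'a set
    \<Rightarrow> ('a \<Rightarrow> 'a \<Rightarrow> complex) \<Rightarrow> 'a set \<Rightarrow> real" where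
  "delta_c c Q V R W = Inf {d. d \<ge> 0 \<and>
     (\<forall>x\<in>V. \<forall>y\<in>V. \<forall>u\<in>W. \<forall>v\<in>W.
        cmod (Q x y - R u v) \<le> d * (norm u + norm x) * (norm v + norm y)
          + c * ((norm u + norm x) * norm (v - y) + norm (u - x) * (norm v + norm y)))}"

end

theory Submission
  imports Defs
begin

text \<open>
  On \<open>\<beta>\<close> the form \<open>hQ\<close> is uniformly negative, \<open>hQ(b,b) \<le> -g\<parallel>b\<parallel>\<^sup>2\<close>, by \<open>\<gamma>(Q|\<^sub>\<beta>) > 0\<close>,
  and \<open>\<alpha>\<close> lies in the real span of a set \<open>B\<close> of at most \<open>2 dim \<alpha>\<close> vectors.
  If \<open>W\<close> is close to \<open>V\<close> and \<open>R\<close> close to \<open>Q\<close>, every real subspace of \<open>W\<close> on which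
  \<open>hR \<ge> 0\<close> has real dimension at most \<open>|B|\<close>: otherwise take \<open>|B| + 1\<close> almost orthogonal
  unit vectors in it (Riesz's lemma), approximate them by vectors \<open>a\<^sub>j + b\<^sub>j\<close> of \<open>V = \<alpha> \<oplus> \<beta>\<close>,
  and cancel the \<open>a\<^sub>j\<close> by a linear relation in \<open>span B\<close>; the same combination \<open>t\<close> of the unit
  vectors is then relatively close to some \<open>b \<in> \<beta>\<close>, so \<open>hR(t,t) \<approx> hQ(b,b) < 0\<close>.
  Finally, a positive definite subspace of \<open>W\<close> and a complement of \<open>W\<^sub>0\<close> in the radical
  \<open>W\<^sup>R\<close> span a complex subspace on which \<open>hR \<ge> 0\<close>; its realification has real dimension
  \<open>2(m\<^sup>+(hR) + dim W\<^sup>R/W\<^sub>0)\<close>.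
\<close>

section \<open>Finite-dimensional subspaces of real normed spaces\<close>

lemma infdist_lessE:
  assumes "A \<noteq> {}" "infdist x A < e"
  obtains a where "a \<in> A" "dist x a < e"
  using assms cInf_lessD[of "(\<lambda>a. dist x a) ` A" e] by (auto simp: infdist_def)

lemma infdist_less_of_gap:
  assumes "gap A B < e" "u \<in> A" "norm u = 1" "0 \<in> B"
  shows "infdist u B < e"
proof -
  have bdd: "bdd_above {infdist u B | u. u \<in> A \<and> norm u = 1}"
    using infdist_le[OF \<open>0 \<in> B\<close>] by (intro bdd_aboveI[of _ 1]) (auto, metis dist_0_norm)
  have "infdist u B \<le> Sup {infdist u B | u. u \<in> A \<and> norm u = 1}"
    using assms(2,3) by (intro cSup_upper[OF _ bdd]) auto
  also have "\<dots> = gap A B"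
    using assms(2,3) by (auto simp: gap_def)
  finally show ?thesis using assms(1) by linarith
qed

lemma norm_add_scaleR_ge:
  fixes M :: "'a::real_normed_vector set"
  assumes "subspace M" "m \<in> M" "\<forall>y\<in>M. d \<le> norm (e - y)"
  shows "\<bar>l\<bar> * d \<le> norm (m + l *\<^sub>R e)"
proof (cases "l = 0")
  case True
  then show ?thesis using assms subspace_0 by fastforce
next
  case False
  have "(- (1/l)) *\<^sub>R m \<in> M" using assms subspace_scale by blast
  then have "d \<le> norm (e - (- (1/l)) *\<^sub>R m)" using assms by blast
  also have "e - (- (1/l)) *\<^sub>R m = (1/l) *\<^sub>R (m + l *\<^sub>R e)"
    using False by (simp add: algebra_simps)
  finally have "d \<le> norm (m + l *\<^sub>R e) / \<bar>l\<bar>" by simp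
  then show ?thesis using False by (simp add: field_simps)
qed

lemma closed_span_insert:
  fixes E :: "'a::real_normed_vector set"
  assumes closed: "closed (span E)" and e: "e \<notin> span E"
  shows "closed (span (insert e E))"
  unfolding closed_sequential_limits
proof (intro allI impI, elim conjE)
  fix y l assume y: "\<forall>n. y n \<in> span (insert e E)" and lim: "y \<longlonglongrightarrow> l"
  define d where "d = infdist e (span E)"
  have d: "0 < d"
    unfolding d_def using infdist_pos_not_in_closed[OF closed _ e] span_zero by blast
  have "d \<le> norm (e - z)" if "z \<in> span E" for z
    using infdist_le[OF that, of e] unfolding d_def dist_norm .
  then have coeff: "\<bar>k\<bar> * d \<le> norm (m + k *\<^sub>R e)" if "m \<in> span E" for m k
    using norm_add_scaleR_ge[OF subspace_span that] by blast
  have "\<forall>n. \<exists>k. y n - k *\<^sub>R e \<in> span E" using y span_breakdown_eq by blast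
  then obtain k where k: "\<And>n. y n - k n *\<^sub>R e \<in> span E" by metis
  have "Cauchy k"
  proof (rule metric_CauchyI)
    fix r :: real assume "0 < r"
    obtain N where N: "\<forall>i\<ge>N. \<forall>j\<ge>N. dist (y i) (y j) < r * d"
      using metric_CauchyD[OF LIMSEQ_imp_Cauchy[OF lim]] \<open>0 < r\<close> d by (meson mult_pos_pos)
    have "dist (k i) (k j) < r" if "N \<le> i" "N \<le> j" for i j
    proof -
      have "\<bar>k i - k j\<bar> * d \<le> norm ((y i - k i *\<^sub>R e) - (y j - k j *\<^sub>R e) + (k i - k j) *\<^sub>R e)"
        using coeff span_diff k by blast
      also have "\<dots> = dist (y i) (y j)" by (simp add: dist_norm algebra_simps)
      also have "\<dots> < r * d" using N that by blast
      finally show ?thesis using d by (simp add: dist_real_def)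
    qed
    then show "\<exists>N. \<forall>i\<ge>N. \<forall>j\<ge>N. dist (k i) (k j) < r" by blast
  qed
  then obtain kl where kl: "k \<longlonglongrightarrow> kl" using Cauchy_convergent_iff convergent_def by blast
  have "(\<lambda>n. y n - k n *\<^sub>R e) \<longlonglongrightarrow> l - kl *\<^sub>R e"
    using lim kl by (intro tendsto_intros)
  then have "l - kl *\<^sub>R e \<in> span E"
    using closed_sequentially[OF closed] k by (metis (no_types, lifting))
  then show "l \<in> span (insert e E)" using span_breakdown_eq by blast
qed

lemma closed_span_finite:
  fixes E :: "'a::real_normed_vector set"
  assumes "finite E"
  shows "closed (span E)"
  using assms
proof (induction E rule: finite_induct)
  case (insert e E)
  show ?case
  proof (cases "e \<in> span E")
    case True
    then show ?thesis using insert.IH by (simp add: span_redundant)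
  next
    case False
    then show ?thesis using insert.IH by (rule closed_span_insert[rotated])
  qed
qed simp

lemma exists_unit_vector_far_from_span:
  fixes F :: "'a::real_normed_vector set"
  assumes "finite F" "x0 \<notin> span F"
  obtains x where "x \<in> span (insert x0 F)" "norm x = 1" "\<forall>y\<in>span F. 1/2 \<le> norm (x - y)"
proof -
  define d where "d = infdist x0 (span F)"
  have d: "0 < d"
    unfolding d_def using infdist_pos_not_in_closed[OF closed_span_finite] assms span_zero by blast
  have "infdist x0 (span F) < 2 * d" using d d_def by simp
  then obtain m0 where m0: "m0 \<in> span F" "dist x0 m0 < 2 * d"
    using infdist_lessE span_zero by blast
  define D where "D = norm (x0 - m0)"
  have D: "0 < D" "D < 2 * d"
    using m0 assms(2) by (auto simp: D_def dist_norm)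
  define x where "x = (1/D) *\<^sub>R (x0 - m0)"
  have "x \<in> span (insert x0 F)"
    unfolding x_def using m0(1) span_mono[of F "insert x0 F"]
    by (intro span_scale span_diff) (auto intro: span_base)
  moreover have "norm x = 1" unfolding x_def using D by (simp add: D_def)
  moreover have "1/2 \<le> norm (x - y)" if y: "y \<in> span F" for y
  proof -
    have "x0 - (m0 + D *\<^sub>R y) = D *\<^sub>R (x - y)"
      using D unfolding x_def by (simp add: algebra_simps)
    moreover have "d \<le> dist x0 (m0 + D *\<^sub>R y)"
      unfolding d_def using y m0 by (intro infdist_le span_add span_scale) auto
    ultimately have "d \<le> D * norm (x - y)"
      using D by (simp add: dist_norm)
    then have "D * (1/2) < D * norm (x - y)"
      using D by linarith
    then show ?thesis using D by simp
  qed
  ultimately show ?thesis using that by blast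
qed

definition almost_orthogonal :: "(nat \<Rightarrow> 'a::real_normed_vector) \<Rightarrow> nat \<Rightarrow> bool" where
  "almost_orthogonal e m \<longleftrightarrow>
     (\<forall>j<m. norm (e j) = 1 \<and> (\<forall>y\<in>span (e ` {..<j}). 1/2 \<le> norm (e j - y)))"

lemma exists_almost_orthogonal_in_span:
  fixes E :: "'a::real_normed_vector set"
  assumes "finite E" "independent E" "m \<le> card E"
  shows "\<exists>e. almost_orthogonal e m \<and> (\<forall>j<m. e j \<in> span E)"
  using assms(3)
proof (induction m)
  case 0
  then show ?case by (simp add: almost_orthogonal_def)
next
  case (Suc m)
  then obtain e where e: "almost_orthogonal e m" "\<forall>j<m. e j \<in> span E" by auto
  have "\<not> E \<subseteq> span (e ` {..<m})"
  proof
    assume "E \<subseteq> span (e ` {..<m})"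
    then have "card E \<le> card (e ` {..<m})"
      using independent_span_bound assms(2) by blast
    also have "\<dots> \<le> m" using card_image_le[of "{..<m}" e] by simp
    finally show False using Suc by simp
  qed
  then obtain x0 where x0: "x0 \<in> E" "x0 \<notin> span (e ` {..<m})" by blast
  then obtain x where x: "x \<in> span (insert x0 (e ` {..<m}))" "norm x = 1"
     "\<forall>y\<in>span (e ` {..<m}). 1/2 \<le> norm (x - y)"
    using exists_unit_vector_far_from_span[OF finite_imageI] by blast
  have "x \<in> span E"
  proof -
    have "insert x0 (e ` {..<m}) \<subseteq> span E" using x0(1) e(2) span_base by auto
    then show ?thesis using x(1) span_mono span_span by blast
  qed
  have same_prefix: "e(m := x) ` {..<j} = e ` {..<j}" if "j \<le> m" for j
    using that by (auto simp: image_def)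
  have orth: "almost_orthogonal (e(m := x)) (Suc m)"
    unfolding almost_orthogonal_def
  proof (intro allI impI)
    fix j assume "j < Suc m"
    then consider "j < m" | "j = m" by linarith
    then show "norm ((e(m := x)) j) = 1 \<and>
        (\<forall>y\<in>span (e(m := x) ` {..<j}). 1/2 \<le> norm ((e(m := x)) j - y))"
      using e(1) x same_prefix[of j] by cases (auto simp: almost_orthogonal_def)
  qed
  show ?case
    using e(2) \<open>x \<in> span E\<close>
    by (intro exI[of _ "e(m := x)"] conjI[OF orth]) (simp add: less_Suc_eq)
qed

lemma almost_orthogonal_coeff_bound:
  assumes e: "almost_orthogonal e m" and j: "j < m"
  shows "\<bar>r j\<bar> \<le> 2 * 3^m * norm (\<Sum>i<m. r i *\<^sub>R e i)"
proof -
  define P where "P k = (\<Sum>i<k. r i *\<^sub>R e i)" for k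
  have coeff: "\<bar>r k\<bar> \<le> 2 * norm (P (Suc k))" if "k < m" for k
  proof -
    have "P k \<in> span (e ` {..<k})"
      unfolding P_def by (intro span_sum span_scale span_base) auto
    moreover have "\<forall>y\<in>span (e ` {..<k}). 1/2 \<le> norm (e k - y)"
      using e that by (simp add: almost_orthogonal_def)
    ultimately have "\<bar>r k\<bar> * (1/2) \<le> norm (P k + r k *\<^sub>R e k)"
      by (rule norm_add_scaleR_ge[OF subspace_span])
    then show ?thesis by (simp add: P_def)
  qed
  have step: "norm (P k) \<le> 3 * norm (P (Suc k))" if "k < m" for k
  proof -
    have "norm (P k) = norm (P (Suc k) - r k *\<^sub>R e k)" by (simp add: P_def)
    also have "\<dots> \<le> norm (P (Suc k)) + norm (r k *\<^sub>R e k)"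
      by (rule norm_triangle_ineq4)
    also have "norm (r k *\<^sub>R e k) = \<bar>r k\<bar>"
      using e that by (simp add: almost_orthogonal_def)
    finally show ?thesis using coeff[OF that] by linarith
  qed
  have prefix: "norm (P (m - k)) \<le> 3^k * norm (P m)" if "k \<le> m" for k
    using that
  proof (induction k)
    case (Suc k)
    then have "norm (P (m - Suc k)) \<le> 3 * norm (P (m - k))"
      using step[of "m - Suc k"] by (simp add: Suc_diff_Suc)
    also have "\<dots> \<le> 3 * (3^k * norm (P m))" using Suc by simp
    finally show ?case by simp
  qed simp
  have "\<bar>r j\<bar> \<le> 2 * norm (P (m - (m - Suc j)))" using coeff j by simp
  also have "\<dots> \<le> 2 * (3^(m - Suc j) * norm (P m))" using prefix[of "m - Suc j"] by simp
  also have "\<dots> \<le> 2 * (3^m * norm (P m))"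
    by (intro mult_left_mono mult_right_mono power_increasing) auto
  finally show ?thesis by (simp add: P_def)
qed

lemma exists_nontrivial_relation_in_span:
  fixes a :: "nat \<Rightarrow> 'a::real_vector"
  assumes "finite B" "card B < m" "\<forall>j<m. a j \<in> span B"
  obtains r where "\<exists>j<m. r j \<noteq> 0" "(\<Sum>j<m. r j *\<^sub>R a j) = 0"
proof (cases "inj_on a {..<m}")
  case True
  have "dependent (a ` {..<m})"
  proof (rule ccontr)
    assume "independent (a ` {..<m})"
    then have "card (a ` {..<m}) \<le> card B"
      using independent_span_bound[of B] assms by auto
    then show False using True assms(2) by (simp add: card_image)
  qed
  then obtain u where u: "\<exists>v\<in>a ` {..<m}. u v \<noteq> 0" "(\<Sum>v\<in>a ` {..<m}. u v *\<^sub>R v) = 0"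
    using dependent_finite[of "a ` {..<m}"] by auto
  then show ?thesis
    using that[of "u \<circ> a"] sum.reindex[OF True, of "\<lambda>v. u v *\<^sub>R v"] by auto
next
  case False
  then obtain i j where ij: "i < m" "j < m" "i \<noteq> j" "a i = a j"
    unfolding inj_on_def by auto
  define r :: "nat \<Rightarrow> real" where "r k = (if k = i then 1 else if k = j then -1 else 0)" for k
  have "(\<Sum>k<m. r k *\<^sub>R a k) = (\<Sum>k\<in>{i, j}. r k *\<^sub>R a k)"
    using ij by (intro sum.mono_neutral_right) (auto simp: r_def)
  also have "\<dots> = 0" using ij by (simp add: r_def)
  finally have "(\<Sum>k<m. r k *\<^sub>R a k) = 0" .
  moreover have "r i \<noteq> 0" by (simp add: r_def)
  ultimately show ?thesis using that ij(1) by blast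
qed

lemma exists_vector_near_summand:
  fixes V \<alpha> \<beta> :: "'a::real_normed_vector set"
  assumes B: "finite B" "\<alpha> \<subseteq> span B" and \<beta>: "subspace \<beta>"
    and V: "V \<subseteq> {a + b | a b. a \<in> \<alpha> \<and> b \<in> \<beta>}" "V \<noteq> {}"
    and E: "finite E" "independent E" "card B < card E"
    and near: "\<forall>u\<in>span E. norm u = 1 \<longrightarrow> infdist u V < \<epsilon>"
  obtains t b where "t \<in> span E" "t \<noteq> 0" "b \<in> \<beta>"
    "norm (t - b) \<le> \<epsilon> * (2 * 3 ^ Suc (card B) * Suc (card B)) * norm t"
proof -
  define m where "m = Suc (card B)"
  obtain e where e: "almost_orthogonal e m" "\<forall>j<m. e j \<in> span E"
    using exists_almost_orthogonal_in_span[OF E(1,2)] E(3) unfolding m_def by (meson Suc_leI)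
  have "\<forall>j\<in>{..<m}. \<exists>a. a \<in> \<alpha> \<and> (\<exists>b. b \<in> \<beta> \<and> norm (e j - (a + b)) < \<epsilon>)"
  proof
    fix j assume "j \<in> {..<m}"
    then have "infdist (e j) V < \<epsilon>" using near e by (simp add: almost_orthogonal_def)
    then obtain v where "v \<in> V" "dist (e j) v < \<epsilon>" using infdist_lessE[OF V(2)] by blast
    then show "\<exists>a. a \<in> \<alpha> \<and> (\<exists>b. b \<in> \<beta> \<and> norm (e j - (a + b)) < \<epsilon>)"
      using V(1) unfolding dist_norm by blast
  qed
  then obtain a where a: "\<forall>j\<in>{..<m}. a j \<in> \<alpha> \<and> (\<exists>b. b \<in> \<beta> \<and> norm (e j - (a j + b)) < \<epsilon>)"
    by (rule bchoice[THEN exE])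
  then have "\<forall>j\<in>{..<m}. \<exists>b. b \<in> \<beta> \<and> norm (e j - (a j + b)) < \<epsilon>" by blast
  then obtain b where b: "\<forall>j\<in>{..<m}. b j \<in> \<beta> \<and> norm (e j - (a j + b j)) < \<epsilon>"
    by (rule bchoice[THEN exE])
  \<comment> \<open>The \<open>\<alpha>\<close>-parts of \<open>m > card B\<close> vectors are linearly dependent; the same relation
    applied to the \<open>e j\<close> gives a vector that is relatively close to \<open>\<beta>\<close>.\<close>
  have "card B < m" "\<forall>j<m. a j \<in> span B" using a B(2) m_def by auto
  then obtain r where r: "\<exists>j<m. r j \<noteq> 0" "(\<Sum>j<m. r j *\<^sub>R a j) = 0"
    using exists_nontrivial_relation_in_span[OF B(1)] by metis
  define t where "t = (\<Sum>j<m. r j *\<^sub>R e j)"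
  define b' where "b' = (\<Sum>j<m. r j *\<^sub>R b j)"
  have coeff: "\<bar>r j\<bar> \<le> 2 * 3^m * norm t" if "j < m" for j
    unfolding t_def using almost_orthogonal_coeff_bound[OF e(1) that] .
  have "t \<noteq> 0" using coeff r(1) by fastforce
  have "t - b' = (\<Sum>j<m. r j *\<^sub>R (e j - (a j + b j)))"
    using r(2)
    by (simp add: t_def b'_def scaleR_diff_right scaleR_add_right sum_subtractf sum.distrib)
  then have "norm (t - b') \<le> (\<Sum>j<m. \<bar>r j\<bar> * norm (e j - (a j + b j)))"
    using norm_sum[of "\<lambda>j. r j *\<^sub>R (e j - (a j + b j))" "{..<m}"] by simp
  also have "\<dots> \<le> (\<Sum>j<m. 2 * 3^m * norm t * \<epsilon>)"
    using coeff b by (intro sum_mono mult_mono) (auto intro: less_imp_le)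
  also have "\<dots> = \<epsilon> * (2 * 3 ^ m * m) * norm t" by simp
  finally have "norm (t - b') \<le> \<epsilon> * (2 * 3 ^ m * m) * norm t" .
  moreover have "t \<in> span E"
    unfolding t_def using e(2) by (intro span_sum span_scale) auto
  moreover have "b' \<in> \<beta>"
    unfolding b'_def using b \<beta> by (intro subspace_sum subspace_scale) auto
  ultimately show ?thesis using that \<open>t \<noteq> 0\<close> unfolding m_def by blast
qed

section \<open>Forms close to a form that is negative on a complement\<close>

lemma Re_diag_neg_of_near:
  fixes Q R :: "'a::real_normed_vector \<Rightarrow> 'a \<Rightarrow> complex"
  assumes neg: "h * Re (Q b b) \<le> - g * (norm b)\<^sup>2" and h: "\<bar>h\<bar> = 1"
    and near: "norm (t - b) \<le> \<theta> * norm t" "\<theta> \<le> 1/2" and t: "t \<noteq> 0"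
    and cd: "0 \<le> c" "0 \<le> d" and small: "25 * d + 20 * c * \<theta> < g"
    and close: "cmod (Q b b - R t t) \<le> d * (norm t + norm b) * (norm t + norm b)
        + c * ((norm t + norm b) * norm (t - b) + norm (t - b) * (norm t + norm b))"
  shows "h * Re (R t t) < 0"
proof -
  define x where "x = norm t"
  have x: "0 < x" using t by (simp add: x_def)
  have "0 \<le> \<theta> * x" using near(1) norm_ge_zero[of "t - b"] unfolding x_def by linarith
  then have \<theta>: "0 \<le> \<theta>" using x by (simp add: zero_le_mult_iff)
  have diff: "norm (t - b) \<le> \<theta> * x" "\<theta> * x \<le> x / 2"
    using near x by (auto simp: x_def)
  have "\<bar>x - norm b\<bar> \<le> norm (t - b)" unfolding x_def by (rule norm_triangle_ineq3)
  then have nb: "x / 2 \<le> norm b" "x + norm b \<le> 5/2 * x" using diff by linarith+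
  have g: "0 \<le> g" using small cd \<theta> by (smt (verit) mult_nonneg_nonneg)
  have "\<bar>h * Re (Q b b - R t t)\<bar> = \<bar>Re (Q b b - R t t)\<bar>"
    using h by (simp only: abs_mult mult_1)
  then have "h * Re (R t t) \<le> h * Re (Q b b) + cmod (Q b b - R t t)"
    using abs_Re_le_cmod[of "Q b b - R t t"] by (simp add: algebra_simps)
  moreover have "h * Re (Q b b) \<le> - g * (x / 2)\<^sup>2"
  proof -
    have "(x / 2)\<^sup>2 \<le> (norm b)\<^sup>2" using nb x by (intro power_mono) auto
    then have "g * (x / 2)\<^sup>2 \<le> g * (norm b)\<^sup>2" using g by (rule mult_left_mono)
    then show ?thesis using neg by linarith
  qed
  moreover have "cmod (Q b b - R t t) \<le> d * (5/2 * x) * (5/2 * x) + c * (2 * ((5/2 * x) * (\<theta> * x)))"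
  proof -
    have "d * (x + norm b) * (x + norm b) \<le> d * (5/2 * x) * (5/2 * x)"
      using nb cd x by (intro mult_mono mult_left_mono) auto
    moreover have "(x + norm b) * norm (t - b) \<le> (5/2 * x) * (\<theta> * x)"
      using nb diff x by (intro mult_mono) auto
    then have "c * ((x + norm b) * norm (t - b) + norm (t - b) * (x + norm b))
        \<le> c * (2 * ((5/2 * x) * (\<theta> * x)))"
      using cd by (intro mult_left_mono) (auto simp: mult.commute)
    ultimately show ?thesis using close[folded x_def] by linarith
  qed
  moreover have "- g * (x / 2)\<^sup>2 + (d * (5/2 * x) * (5/2 * x) + c * (2 * ((5/2 * x) * (\<theta> * x))))
      = x\<^sup>2 / 4 * (25 * d + 20 * c * \<theta> - g)"
    by (simp add: power2_eq_square algebra_simps)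
  moreover have "x\<^sup>2 / 4 * (25 * d + 20 * c * \<theta> - g) < 0" using x small by (simp add: mult_pos_neg)
  ultimately show ?thesis by linarith
qed

definition delta_c_admissible ::
    "real \<Rightarrow> ('a::real_normed_vector \<Rightarrow> 'a \<Rightarrow> complex) \<Rightarrow> 'a set \<Rightarrow> ('a \<Rightarrow> 'a \<Rightarrow> complex) \<Rightarrow> 'a set
      \<Rightarrow> real \<Rightarrow> bool" where
  "delta_c_admissible c Q V R W d \<longleftrightarrow> d \<ge> 0 \<and>
     (\<forall>x\<in>V. \<forall>y\<in>V. \<forall>u\<in>W. \<forall>v\<in>W.
        cmod (Q x y - R u v) \<le> d * (norm u + norm x) * (norm v + norm y)
          + c * ((norm u + norm x) * norm (v - y) + norm (u - x) * (norm v + norm y)))"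

lemma delta_c_eq_Inf: "delta_c c Q V R W = Inf (Collect (delta_c_admissible c Q V R W))"
  unfolding delta_c_def delta_c_admissible_def by (rule refl)

lemma card_le_of_nonneg_near:
  fixes Q :: "'a::real_normed_vector \<Rightarrow> 'a \<Rightarrow> complex"
  assumes B: "finite B" "\<alpha> \<subseteq> span B" and \<beta>: "subspace \<beta>" "\<beta> \<subseteq> V"
    and V: "V \<subseteq> {a + b | a b. a \<in> \<alpha> \<and> b \<in> \<beta>}"
    and neg: "0 < g" "\<forall>b\<in>\<beta>. h * Re (Q b b) \<le> - g * (norm b)\<^sup>2"
    and h: "\<bar>h\<bar> = 1" and c: "0 \<le> c"
  obtains \<epsilon> where "0 < \<epsilon>"
    "\<And>R W E d. subspace W \<Longrightarrow> \<forall>u\<in>W. norm u = 1 \<longrightarrow> infdist u V < \<epsilon> \<Longrightarrow>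
      d < \<epsilon> \<Longrightarrow> delta_c_admissible c Q V R W d \<Longrightarrow>
      finite E \<Longrightarrow> independent E \<Longrightarrow> E \<subseteq> W \<Longrightarrow> \<forall>t\<in>span E. 0 \<le> h * Re (R t t) \<Longrightarrow>
      card E \<le> card B"
proof -
  define K :: real where "K = 2 * 3 ^ Suc (card B) * Suc (card B)"
  \<comment> \<open>\<open>\<epsilon> K \<le> 1/2\<close> keeps \<open>norm b\<close> between \<open>norm t / 2\<close> and \<open>3 norm t / 2\<close>, and then the
    second bound lets \<open>-g (norm b)\<^sup>2\<close> dominate the perturbation.\<close>
  define \<epsilon> where "\<epsilon> = min (1 / (2 * K)) (g / (25 + 20 * c * K))"
  have K: "0 < K" unfolding K_def by (simp only: of_nat_0_less_iff) simp
  have den: "0 < 25 + 20 * c * K" using c K by (simp add: add_pos_nonneg)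
  have \<epsilon>: "0 < \<epsilon>" unfolding \<epsilon>_def using K neg(1) den by simp
  have "\<epsilon> \<le> 1 / (2 * K)" "\<epsilon> \<le> g / (25 + 20 * c * K)"
    unfolding \<epsilon>_def by simp_all
  then have "\<epsilon> * (2 * K) \<le> 1" "\<epsilon> * (25 + 20 * c * K) \<le> g"
    using K den by (simp_all add: pos_le_divide_eq)
  then have \<epsilon>K: "\<epsilon> * K \<le> 1/2" and \<epsilon>g: "25 * \<epsilon> + 20 * c * (\<epsilon> * K) \<le> g"
    by (simp_all add: algebra_simps)
  show thesis
  proof (rule that[OF \<epsilon>])
    fix R W E d
    assume W: "subspace W" "\<forall>u\<in>W. norm u = 1 \<longrightarrow> infdist u V < \<epsilon>"
      and d: "d < \<epsilon>" "delta_c_admissible c Q V R W d"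
      and E: "finite E" "independent E" "E \<subseteq> W" and nonneg: "\<forall>t\<in>span E. 0 \<le> h * Re (R t t)"
    show "card E \<le> card B"
    proof (rule ccontr)
      assume "\<not> card E \<le> card B"
      then have "card B < card E" by simp
      have "V \<noteq> {}" using \<beta> subspace_0 by blast
      have "span E \<subseteq> W" using E(3) W(1) by (rule span_minimal)
      then have "\<forall>u\<in>span E. norm u = 1 \<longrightarrow> infdist u V < \<epsilon>" using W(2) by blast
      then obtain t b where tb: "t \<in> span E" "t \<noteq> 0" "b \<in> \<beta>" "norm (t - b) \<le> \<epsilon> * K * norm t"
        using exists_vector_near_summand[OF B \<beta>(1) V \<open>V \<noteq> {}\<close> E(1,2) \<open>card B < card E\<close>]
        unfolding K_def by blast
      have "h * Re (R t t) < 0"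
      proof (rule Re_diag_neg_of_near[OF _ h tb(4) \<epsilon>K tb(2) c])
        show "h * Re (Q b b) \<le> - g * (norm b)\<^sup>2" using neg(2) tb(3) by blast
        show "0 \<le> d" using d(2) by (simp add: delta_c_admissible_def)
        show "25 * d + 20 * c * (\<epsilon> * K) < g" using d(1) \<epsilon>g by linarith
        show "cmod (Q b b - R t t) \<le> d * (norm t + norm b) * (norm t + norm b)
            + c * ((norm t + norm b) * norm (t - b) + norm (t - b) * (norm t + norm b))"
          using d(2) tb(1,3) \<beta>(2) \<open>span E \<subseteq> W\<close> unfolding delta_c_admissible_def by blast
      qed
      then show False using nonneg tb(1) by fastforce
    qed
  qed
qed

section \<open>Complex scalars and realification\<close>

interpretation cv: vector_space "scaleC :: complex \<Rightarrow> 'a::cvector \<Rightarrow> 'a"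
  by unfold_locales (auto simp: scaleC_add_right scaleC_add_left scaleC_scaleC scaleC_one)

lemma csubspace_iff_cv_subspace: "csubspace S \<longleftrightarrow> cv.subspace S"
  unfolding csubspace_def cv.subspace_def by auto

lemma csubspace_imp_subspace: "csubspace S \<Longrightarrow> subspace S"
  unfolding csubspace_def subspace_def by (auto simp: scaleR_scaleC)

lemma cindep_mod_zero_iff: "finite F \<Longrightarrow> cindep_mod {0} F \<longleftrightarrow> \<not> cv.dependent F"
  unfolding cindep_mod_def using cv.dependent_finite[of F] by auto

lemma scaleC_eq_Re_Im: "scaleC u v = Re u *\<^sub>R v + Im u *\<^sub>R scaleC \<i> v"
proof -
  have "u = complex_of_real (Re u) + complex_of_real (Im u) * \<i>" by (simp add: complex_eq_iff)
  then have "scaleC u v = scaleC (complex_of_real (Re u)) v + scaleC (complex_of_real (Im u) * \<i>) v"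
    by (metis scaleC_add_left)
  also have "\<dots> = Re u *\<^sub>R v + Im u *\<^sub>R scaleC \<i> v"
    by (simp add: scaleR_scaleC scaleC_scaleC)
  finally show ?thesis .
qed

lemma cv_span_subset_span_realify:
  fixes F :: "'a::cvector set"
  assumes "finite F"
  shows "cv.span F \<subseteq> span (F \<union> scaleC \<i> ` F)"
proof
  fix x assume "x \<in> cv.span F"
  then obtain u where x: "x = (\<Sum>v\<in>F. scaleC (u v) v)" using cv.span_finite[OF assms] by auto
  have "scaleC (u v) v \<in> span (F \<union> scaleC \<i> ` F)" if "v \<in> F" for v
    unfolding scaleC_eq_Re_Im[of "u v" v] using that
    by (intro span_add span_scale span_base) auto
  then show "x \<in> span (F \<union> scaleC \<i> ` F)"
    unfolding x by (intro span_sum)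
qed

lemma cdim_eq_enat_cspanE:
  fixes A :: "'a::cvector set"
  assumes "cdim A = enat n"
  obtains F where "finite F" "card F \<le> n" "A \<subseteq> cv.span F"
proof -
  define Z where "Z = {enat (card F) | F. finite F \<and> F \<subseteq> A \<and> cindep_mod {0} F}"
  have SZ: "Sup Z = enat n" using assms unfolding Z_def cdim_def cdim_quot_def by simp
  then have Zb: "\<forall>z\<in>Z. z \<le> enat n" by (metis Sup_upper)
  have "enat 0 \<in> Z" unfolding Z_def cindep_mod_def by (intro CollectI exI[of _ "{}"]) auto
  then have "Sup Z \<in> Z" using Zb finite_enat_bounded by (auto simp: Sup_enat_def)
  then have "enat n \<in> Z" using SZ by simp
  then obtain F where F: "finite F" "F \<subseteq> A" "cindep_mod {0} F" "card F = n"
    unfolding Z_def by auto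
  have "A \<subseteq> cv.span F"
  proof
    fix x assume x: "x \<in> A"
    show "x \<in> cv.span F"
    proof (rule ccontr)
      assume nx: "x \<notin> cv.span F"
      then have xF: "x \<notin> F" using cv.span_base by blast
      have "\<not> cv.dependent F" using cindep_mod_zero_iff F by blast
      then have "\<not> cv.dependent (insert x F)" using cv.independent_insert[of x F] nx xF by simp
      then have "cindep_mod {0} (insert x F)" using cindep_mod_zero_iff F(1) by blast
      then have "enat (card (insert x F)) \<in> Z" unfolding Z_def using F x by auto
      then show False using Zb F xF by auto
    qed
  qed
  then show ?thesis using that F by simp
qed

lemma independent_realify:
  fixes H :: "'a::cvector set"
  assumes fin: "finite H" and ind: "\<not> cv.dependent H"
  shows "independent (H \<union> scaleC \<i> ` H)" "card (H \<union> scaleC \<i> ` H) = 2 * card H"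
proof -
  have inj: "inj (scaleC \<i> :: 'a \<Rightarrow> 'a)"
  proof (rule injI)
    fix x y :: 'a assume "scaleC \<i> x = scaleC \<i> y"
    then have "scaleC (- \<i>) (scaleC \<i> x) = scaleC (- \<i>) (scaleC \<i> y)" by simp
    then show "x = y" by (simp add: scaleC_scaleC scaleC_one)
  qed
  have disj: "H \<inter> scaleC \<i> ` H = {}"
  proof (rule ccontr)
    assume "H \<inter> scaleC \<i> ` H \<noteq> {}"
    then obtain x y where xy: "x \<in> H" "y \<in> H" "x = scaleC \<i> y" by blast
    show False
    proof (cases "x = y")
      case True
      then have "scaleC (1 - \<i>) y = 0" using xy
        by (metis cv.scale_left_diff_distrib diff_self scaleC_one)
      then have "y = 0" by (simp add: cv.scale_eq_0_iff)
      then show False using ind xy cv.dependent_zero by blast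
    next
      case False
      then have "x \<in> cv.span (H - {x})"
        unfolding xy(3) using xy by (intro cv.span_scale cv.span_base) auto
      then show False using ind xy cv.dependent_def by blast
    qed
  qed
  show "card (H \<union> scaleC \<i> ` H) = 2 * card H"
    using card_Un_disjoint[OF fin finite_imageI[OF fin] disj] card_image[OF inj_on_subset[OF inj]]
    by simp
  show "independent (H \<union> scaleC \<i> ` H)"
  proof
    assume "dependent (H \<union> scaleC \<i> ` H)"
    then obtain u where u: "\<exists>v \<in> H \<union> scaleC \<i> ` H. u v \<noteq> 0" "(\<Sum>v\<in>H \<union> scaleC \<i> ` H. u v *\<^sub>R v) = 0"
      using dependent_finite[of "H \<union> scaleC \<i> ` H"] fin by auto
    define w where "w v = Complex (u v) (u (scaleC \<i> v))" for v
    have "(\<Sum>v\<in>H \<union> scaleC \<i> ` H. u v *\<^sub>R v)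
        = (\<Sum>v\<in>H. u v *\<^sub>R v) + (\<Sum>v\<in>H. u (scaleC \<i> v) *\<^sub>R scaleC \<i> v)"
      unfolding sum.union_disjoint[OF fin finite_imageI[OF fin] disj]
      using sum.reindex[OF inj_on_subset[OF inj], of H "\<lambda>v. u v *\<^sub>R v"] by simp
    also have "\<dots> = (\<Sum>v\<in>H. scaleC (w v) v)"
      by (simp add: w_def scaleC_eq_Re_Im[of "Complex _ _"] sum.distrib)
    finally have "(\<Sum>v\<in>H. scaleC (w v) v) = 0" using u(2) by simp
    then have "\<forall>v\<in>H. w v = 0" using ind cv.dependent_finite[OF fin] by blast
    then have "\<forall>v\<in>H. u v = 0 \<and> u (scaleC \<i> v) = 0" by (simp add: w_def complex_eq_iff)
    then show False using u(1) by auto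
  qed
qed

lemma cdim_eq_enat_spanE:
  fixes A :: "'a::cvector set"
  assumes "cdim A = enat n"
  obtains B where "finite B" "card B \<le> 2 * n" "A \<subseteq> span B"
proof -
  obtain F where F: "finite F" "card F \<le> n" "A \<subseteq> cv.span F"
    using cdim_eq_enat_cspanE[OF assms] .
  have "card (F \<union> scaleC \<i> ` F) \<le> card F + card F"
    using card_Un_le[of F "scaleC \<i> ` F"] card_image_le[OF F(1), of "scaleC \<i>"] by linarith
  then show ?thesis
    using that[of "F \<union> scaleC \<i> ` F"] F cv_span_subset_span_realify[OF F(1)] by auto
qed

lemma Sup_add_Sup_le_enat:
  fixes X Y :: "enat set"
  assumes "X \<noteq> {}" "Y \<noteq> {}" "\<And>x y. x \<in> X \<Longrightarrow> y \<in> Y \<Longrightarrow> x + y \<le> enat n"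
  shows "Sup X + Sup Y \<le> enat n"
proof -
  obtain x0 y0 where "x0 \<in> X" "y0 \<in> Y" using assms(1,2) by blast
  have "finite X"
    using assms(3)[OF _ \<open>y0 \<in> Y\<close>] finite_enat_bounded by (meson le_iff_add order_trans)
  moreover have "finite Y"
    using assms(3)[OF \<open>x0 \<in> X\<close>] finite_enat_bounded by (metis add.commute le_iff_add order_trans)
  ultimately have "Sup X \<in> X" "Sup Y \<in> Y" using assms(1,2) by (simp_all add: Sup_enat_def)
  then show ?thesis by (rule assms(3))
qed

lemma cdim_quot_le_enatI:
  assumes "\<And>F. finite F \<Longrightarrow> F \<subseteq> A \<Longrightarrow> cindep_mod B F \<Longrightarrow> card F \<le> k"
  shows "cdim_quot A B \<le> enat k"
  unfolding cdim_quot_def using assms by (auto intro!: Sup_least)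

section \<open>Bounded symmetric pairs\<close>

lemma radical_subset: "radical R W \<subseteq> W"
  unfolding radical_def Qorth_def by auto

context
  fixes R :: "'a::cbanach \<Rightarrow> 'a \<Rightarrow> complex" and W :: "'a set"
  assumes RW: "bounded_symmetric_pair R W"
begin

lemma bsp_csubspace: "csubspace W"
  using RW unfolding bounded_symmetric_pair_def closed_csubspace_def by blast

lemma bsp_add_left: "x \<in> W \<Longrightarrow> y \<in> W \<Longrightarrow> z \<in> W \<Longrightarrow> R (x + y) z = R x z + R y z"
  using RW unfolding bounded_symmetric_pair_def by blast

lemma bsp_scaleC_left: "x \<in> W \<Longrightarrow> y \<in> W \<Longrightarrow> R (scaleC a x) y = a * R x y"
  using RW unfolding bounded_symmetric_pair_def by blast

lemma bsp_hermitian: "x \<in> W \<Longrightarrow> y \<in> W \<Longrightarrow> R x y = cnj (R y x)"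
  using RW unfolding bounded_symmetric_pair_def by blast

lemma bsp_bound: "\<exists>C\<ge>0. \<forall>x\<in>W. \<forall>y\<in>W. cmod (R x y) \<le> C * norm x * norm y"
proof -
  obtain C where C: "\<forall>x\<in>W. \<forall>y\<in>W. cmod (R x y) \<le> C * norm x * norm y"
    using RW unfolding bounded_symmetric_pair_def by blast
  have "cmod (R x y) \<le> max C 0 * norm x * norm y" if "x \<in> W" "y \<in> W" for x y
  proof -
    have "cmod (R x y) \<le> C * norm x * norm y" using C that by blast
    also have "\<dots> \<le> max C 0 * norm x * norm y" by (intro mult_right_mono) auto
    finally show ?thesis .
  qed
  then show ?thesis by (intro exI[of _ "max C 0"]) auto
qed

lemma bsp_zero_left: "y \<in> W \<Longrightarrow> R 0 y = 0"
  using bsp_scaleC_left[of 0 y 0] bsp_csubspace by (simp add: csubspace_def)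

lemma bsp_cmod_diag: "x \<in> W \<Longrightarrow> cmod (R x x) = \<bar>Re (R x x)\<bar>"
  using bsp_hermitian[of x x]
  by (metis cmod_eq_Re cnj.simps(2) complex_cnj_cancel_iff neg_equal_zero)

lemma csubspace_radical: "csubspace (radical R W)"
  using bsp_csubspace bsp_zero_left bsp_add_left bsp_scaleC_left
  unfolding csubspace_def radical_def Qorth_def by auto

lemma bsp_Re_add_radical:
  assumes s: "s \<in> W" and r: "r \<in> radical R W"
  shows "Re (R (s + r) (s + r)) = Re (R s s)"
proof -
  have rW: "r \<in> W" and r0: "\<And>v. v \<in> W \<Longrightarrow> R r v = 0"
    using r unfolding radical_def Qorth_def by auto
  have sr: "s + r \<in> W" using s rW bsp_csubspace unfolding csubspace_def by auto
  have "R (s + r) (s + r) = cnj (R (s + r) s)"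
    using bsp_add_left[OF s rW sr] bsp_hermitian[OF s sr] r0[OF sr] by simp
  also have "R (s + r) s = R s s" using bsp_add_left[OF s rW s] r0[OF s] by simp
  finally show ?thesis by simp
qed

lemma positive_Int_radical:
  assumes "S \<subseteq> W" "\<forall>x\<in>S - {0}. 0 < h * Re (R x x)" "z \<in> S" "z \<in> radical R W"
  shows "z = 0"
  using assms unfolding radical_def Qorth_def by force

lemma nonneg_add_radical:
  assumes "S \<subseteq> W" "\<forall>x\<in>S - {0}. 0 < h * Re (R x x)" "s \<in> S" "r \<in> radical R W"
  shows "0 \<le> h * Re (R (s + r) (s + r))"
proof (cases "s = 0")
  case True
  then show ?thesis
    using assms(4) unfolding radical_def Qorth_def by auto
next
  case False
  then have "s \<in> W" "0 < h * Re (R s s)" using assms(1-3) by auto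
  then show ?thesis using bsp_Re_add_radical[OF _ assms(4)] by simp
qed

lemma independent_Un_radical:
  assumes S: "csubspace S" "S \<subseteq> W" "\<forall>x\<in>S - {0}. 0 < h * Re (R x x)"
    and F: "finite F" "F \<subseteq> S" "cindep_mod {0} F"
    and G: "finite G" "G \<subseteq> radical R W" "cindep_mod W0 G" and W0: "0 \<in> W0"
  shows "\<not> cv.dependent (F \<union> G)" "card (F \<union> G) = card F + card G"
proof -
  have "0 \<notin> F"
    using F cindep_mod_zero_iff cv.dependent_zero by blast
  then have disj: "F \<inter> G = {}"
    using positive_Int_radical[OF S(2,3)] F(2) G(2) by blast
  then show "card (F \<union> G) = card F + card G" by (rule card_Un_disjoint[OF F(1) G(1)])
  show "\<not> cv.dependent (F \<union> G)"
  proof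
    assume "cv.dependent (F \<union> G)"
    then obtain u where u: "\<exists>v\<in>F \<union> G. u v \<noteq> 0" "(\<Sum>v\<in>F \<union> G. scaleC (u v) v) = 0"
      using cv.dependent_finite F(1) G(1) by blast
    define s where "s = (\<Sum>v\<in>F. scaleC (u v) v)"
    define r where "r = (\<Sum>v\<in>G. scaleC (u v) v)"
    have "s + r = 0"
      using u(2) unfolding s_def r_def sum.union_disjoint[OF F(1) G(1) disj] .
    have "s \<in> S" "r \<in> radical R W"
      using F(2) G(2) S(1) csubspace_radical unfolding s_def r_def csubspace_iff_cv_subspace
      by (auto intro!: cv.subspace_sum cv.subspace_scale)
    then have "- r \<in> radical R W"
      using csubspace_radical cv.subspace_neg unfolding csubspace_iff_cv_subspace by blast
    moreover have "s = - r" using \<open>s + r = 0\<close> by (simp add: eq_neg_iff_add_eq_0)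
    ultimately have "s = 0" using positive_Int_radical[OF S(2,3) \<open>s \<in> S\<close>] by simp
    then have "r = 0" using \<open>s + r = 0\<close> by simp
    then show False
      using u(1) F(3) G(3) W0 \<open>s = 0\<close> unfolding cindep_mod_def s_def r_def by auto
  qed
qed

lemma exists_nonneg_realification:
  assumes S: "csubspace S" "S \<subseteq> W" "\<forall>x\<in>S - {0}. 0 < h * Re (R x x)"
    and F: "finite F" "F \<subseteq> S" "cindep_mod {0} F"
    and G: "finite G" "G \<subseteq> radical R W" "cindep_mod W0 G" and W0: "0 \<in> W0"
  obtains E where "finite E" "independent E" "E \<subseteq> W" "card E = 2 * (card F + card G)"
    "\<forall>t\<in>span E. 0 \<le> h * Re (R t t)"
proof -
  let ?H = "F \<union> G"
  define E where "E = ?H \<union> scaleC \<i> ` ?H"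
  have H: "\<not> cv.dependent ?H" "card ?H = card F + card G"
    using independent_Un_radical[OF S F G W0] by auto
  have fin: "finite ?H" using F(1) G(1) by blast
  define Z where "Z = {s + r | s r. s \<in> S \<and> r \<in> radical R W}"
  have "subspace Z"
    unfolding Z_def using csubspace_imp_subspace S(1) csubspace_radical by (intro subspace_sums)
  moreover have "E \<subseteq> Z"
  proof -
    have "0 \<in> S" "0 \<in> radical R W" "scaleC \<i> ` S \<subseteq> S" "scaleC \<i> ` radical R W \<subseteq> radical R W"
      using S(1) csubspace_radical by (auto simp: csubspace_def)
    then have "S \<subseteq> Z" "radical R W \<subseteq> Z" "scaleC \<i> ` S \<subseteq> Z" "scaleC \<i> ` radical R W \<subseteq> Z"
      unfolding Z_def by force+
    then show ?thesis unfolding E_def using F(2) G(2) by blast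
  qed
  ultimately have "span E \<subseteq> Z" by (rule span_minimal[rotated])
  then have "\<forall>t\<in>span E. 0 \<le> h * Re (R t t)"
    unfolding Z_def using nonneg_add_radical[OF S(2,3)] by blast
  moreover have "E \<subseteq> W"
    using \<open>E \<subseteq> Z\<close> S(2) radical_subset[of R W] bsp_csubspace unfolding Z_def csubspace_def by blast
  ultimately show ?thesis
    using that[of E] independent_realify[OF fin H(1)] fin H(2) unfolding E_def by auto
qed

end

lemma delta_c_admissible_exists:
  assumes "bounded_symmetric_pair Q V" "bounded_symmetric_pair R W" "0 \<le> c"
  shows "\<exists>d. delta_c_admissible c Q V R W d"
proof -
  obtain C1 C2 where C: "C1 \<ge> 0" "\<forall>x\<in>V. \<forall>y\<in>V. cmod (Q x y) \<le> C1 * norm x * norm y"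
      "C2 \<ge> 0" "\<forall>u\<in>W. \<forall>v\<in>W. cmod (R u v) \<le> C2 * norm u * norm v"
    using bsp_bound[OF assms(1)] bsp_bound[OF assms(2)] by blast
  have "cmod (Q x y - R u v) \<le> (C1 + C2) * (norm u + norm x) * (norm v + norm y)"
    if "x \<in> V" "y \<in> V" "u \<in> W" "v \<in> W" for x y u v
  proof -
    have "cmod (Q x y - R u v) \<le> C1 * norm x * norm y + C2 * norm u * norm v"
      using norm_triangle_ineq4[of "Q x y" "R u v"] C that by force
    also have "\<dots> \<le> (C1 + C2) * (norm u + norm x) * (norm v + norm y)"
      using C by (simp add: algebra_simps add_increasing)
    finally show ?thesis .
  qed
  moreover have "0 \<le> c * ((norm u + norm x) * norm (v - y) + norm (u - x) * (norm v + norm y))"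
    for u v x y :: 'a
    using assms(3) by simp
  ultimately have "delta_c_admissible c Q V R W (C1 + C2)"
    unfolding delta_c_admissible_def using C by (smt (verit))
  then show ?thesis ..
qed

lemma delta_c_lessE:
  assumes "bounded_symmetric_pair Q V" "bounded_symmetric_pair R W" "0 \<le> c"
    and "delta_c c Q V R W < \<epsilon>"
  obtains d where "d < \<epsilon>" "delta_c_admissible c Q V R W d"
  using cInf_lessD[of "Collect (delta_c_admissible c Q V R W)" \<epsilon>]
    delta_c_admissible_exists[OF assms(1-3)] assms(4) that
  unfolding delta_c_eq_Inf by blast

lemma radical_eq_zero_of_definite:
  assumes "bounded_symmetric_pair Q V" "csubspace \<beta>" "\<beta> \<subseteq> V"
    and "\<forall>x\<in>\<beta> - {0}. h * Re (Q x x) < 0"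
  shows "radical Q \<beta> = {0}"
proof
  show "radical Q \<beta> \<subseteq> {0}"
    using assms(4) unfolding radical_def Qorth_def by force
  have "0 \<in> \<beta>" using assms(2) by (simp add: csubspace_def)
  then show "{0} \<subseteq> radical Q \<beta>"
    using bsp_zero_left[OF assms(1)] assms(3) unfolding radical_def Qorth_def by blast
qed

lemma negative_definite_quadratic_bound:
  assumes QV: "bounded_symmetric_pair Q V" and \<beta>: "csubspace \<beta>" "\<beta> \<subseteq> V"
    and h: "\<bar>h\<bar> = 1" and neg: "\<forall>x\<in>\<beta> - {0}. h * Re (Q x x) < 0"
    and gamma: "gamma Q \<beta> > 0"
  obtains g where "0 < g" "\<forall>b\<in>\<beta>. h * Re (Q b b) \<le> - g * (norm b)\<^sup>2"
proof -
  obtain g where g: "0 < ereal g" "ereal g < gamma Q \<beta>"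
    using ereal_dense2[OF gamma] by blast
  have rad: "radical Q \<beta> = {0}"
    using radical_eq_zero_of_definite[OF QV \<beta> neg] .
  have "h * Re (Q b b) \<le> - g * (norm b)\<^sup>2" if b: "b \<in> \<beta>" "b \<noteq> 0" for b
  proof -
    have "\<beta> \<noteq> {0}" using b by blast
    then have "gamma Q \<beta> = Inf {ereal (cmod (Q x x) / (norm x)\<^sup>2) | x. x \<in> \<beta> - {0}}"
      by (simp add: gamma_def rad)
    also have "\<dots> \<le> ereal (cmod (Q b b) / (norm b)\<^sup>2)"
      using b by (intro Inf_lower) auto
    finally have "gamma Q \<beta> \<le> ereal (cmod (Q b b) / (norm b)\<^sup>2)" .
    with g(2) have "ereal g < ereal (cmod (Q b b) / (norm b)\<^sup>2)" by (rule order.strict_trans2)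
    then have "g < cmod (Q b b) / (norm b)\<^sup>2" by simp
    then have "g * (norm b)\<^sup>2 \<le> cmod (Q b b)" using b by (simp add: field_simps)
    moreover have "\<bar>h * Re (Q b b)\<bar> = \<bar>Re (Q b b)\<bar>" using h by (simp only: abs_mult mult_1)
    moreover have "cmod (Q b b) = \<bar>Re (Q b b)\<bar>" using bsp_cmod_diag[OF QV] b \<beta>(2) by blast
    moreover have "h * Re (Q b b) < 0" using neg b by blast
    ultimately show ?thesis by linarith
  qed
  moreover have "Q 0 0 = 0" using bsp_zero_left[OF QV] \<beta> unfolding csubspace_def by blast
  ultimately have "h * Re (Q b b) \<le> - g * (norm b)\<^sup>2" if "b \<in> \<beta>" for b
    using that by (cases "b = 0") auto
  then show ?thesis using that g(1) by simp
qed

lemma m_plus_add_cdim_quot_le: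
  fixes R :: "'a::cvector \<Rightarrow> 'a \<Rightarrow> complex"
  assumes W: "0 \<in> W"
    and count: "\<And>S F G. csubspace S \<Longrightarrow> S \<subseteq> W \<Longrightarrow> \<forall>x\<in>S - {0}. 0 < h * Re (R x x) \<Longrightarrow>
        finite F \<Longrightarrow> F \<subseteq> S \<Longrightarrow> cindep_mod {0} F \<Longrightarrow>
        finite G \<Longrightarrow> G \<subseteq> A \<Longrightarrow> cindep_mod B G \<Longrightarrow> card F + card G \<le> n"
  shows "m_plus h R W + cdim_quot A B \<le> enat n"
  unfolding m_plus_def cdim_quot_def[of A]
proof (rule Sup_add_Sup_le_enat)
  have zero: "csubspace {0}" "{0} \<subseteq> W" "\<forall>x\<in>{0} - {0}. 0 < h * Re (R x x)"
    using W by (auto simp: csubspace_def)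
  then show "{cdim S |S. csubspace S \<and> S \<subseteq> W \<and> (\<forall>x\<in>S - {0}. 0 < h * Re (R x x))} \<noteq> {}"
    by blast
  show "{enat (card G) |G. finite G \<and> G \<subseteq> A \<and> cindep_mod B G} \<noteq> {}"
    by (auto simp: cindep_mod_def)
  fix x y
  assume "x \<in> {cdim S |S. csubspace S \<and> S \<subseteq> W \<and> (\<forall>x\<in>S - {0}. 0 < h * Re (R x x))}"
    and "y \<in> {enat (card G) |G. finite G \<and> G \<subseteq> A \<and> cindep_mod B G}"
  then obtain S G where S: "x = cdim S" "csubspace S" "S \<subseteq> W" "\<forall>x\<in>S - {0}. 0 < h * Re (R x x)"
    and G: "y = enat (card G)" "finite G" "G \<subseteq> A" "cindep_mod B G"
    by blast
  have "card G \<le> n"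
    using count[OF zero, of "{}"] G by (simp add: cindep_mod_def)
  moreover have "cdim S \<le> enat (n - card G)"
    unfolding cdim_def
  proof (rule cdim_quot_le_enatI)
    fix F assume "finite F" "F \<subseteq> S" "cindep_mod {0} F"
    then have "card F + card G \<le> n" by (rule count[OF S(2-4) _ _ _ G(2-4)])
    then show "card F \<le> n - card G" by simp
  qed
  then have "cdim S + enat (card G) \<le> enat (n - card G) + enat (card G)"
    by (rule add_right_mono)
  ultimately show "x + y \<le> enat n" using S(1) G(1) by simp
qed

lemma m_plus_add_cdim_quot_radical_le:
  fixes R :: "'a::cbanach \<Rightarrow> 'a \<Rightarrow> complex"
  assumes RW: "bounded_symmetric_pair R W" and W0: "0 \<in> W0"
    and bound: "\<And>E. finite E \<Longrightarrow> independent E \<Longrightarrow> E \<subseteq> W \<Longrightarrow>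
      \<forall>t\<in>span E. 0 \<le> h * Re (R t t) \<Longrightarrow> card E \<le> 2 * n"
  shows "m_plus h R W + cdim_quot (radical R W) W0 \<le> enat n"
proof (rule m_plus_add_cdim_quot_le)
  show "0 \<in> W" using bsp_csubspace[OF RW] by (simp add: csubspace_def)
  fix S F G
  assume S: "csubspace S" "S \<subseteq> W" "\<forall>x\<in>S - {0}. 0 < h * Re (R x x)"
    and F: "finite F" "F \<subseteq> S" "cindep_mod {0} F"
    and G: "finite G" "G \<subseteq> radical R W" "cindep_mod W0 G"
  obtain E where "finite E" "independent E" "E \<subseteq> W" "card E = 2 * (card F + card G)"
      "\<forall>t\<in>span E. 0 \<le> h * Re (R t t)"
    using exists_nonneg_realification[OF RW S F G W0] .
  then show "card F + card G \<le> n" using bound by fastforce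
qed

lemma m_plus_le_near_decomposition:
  fixes Q :: "'a::cbanach \<Rightarrow> 'a \<Rightarrow> complex"
  assumes B: "finite B" "card B \<le> 2 * n" "\<alpha> \<subseteq> span B"
    and \<beta>: "subspace \<beta>" "\<beta> \<subseteq> V" and V: "V \<subseteq> {a + b | a b. a \<in> \<alpha> \<and> b \<in> \<beta>}"
    and QV: "bounded_symmetric_pair Q V"
    and neg: "0 < g" "\<forall>b\<in>\<beta>. h * Re (Q b b) \<le> - g * (norm b)\<^sup>2"
    and h: "\<bar>h\<bar> = 1" and c: "0 \<le> c"
  obtains \<epsilon> where "0 < \<epsilon>"
    "\<And>R W W0. bounded_symmetric_pair R W \<Longrightarrow> 0 \<in> W0 \<Longrightarrow>
      gap_hat V W < \<epsilon> \<Longrightarrow> delta_c c Q V R W < \<epsilon> \<Longrightarrow>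
      m_plus h R W + cdim_quot (radical R W) W0 \<le> enat n"
proof -
  obtain \<epsilon> where \<epsilon>: "0 < \<epsilon>"
    and card_le: "\<And>R W E d. subspace W \<Longrightarrow> \<forall>u\<in>W. norm u = 1 \<longrightarrow> infdist u V < \<epsilon> \<Longrightarrow>
      d < \<epsilon> \<Longrightarrow> delta_c_admissible c Q V R W d \<Longrightarrow>
      finite E \<Longrightarrow> independent E \<Longrightarrow> E \<subseteq> W \<Longrightarrow> \<forall>t\<in>span E. 0 \<le> h * Re (R t t) \<Longrightarrow>
      card E \<le> card B"
    using card_le_of_nonneg_near[where Q = Q, OF B(1,3) \<beta> V neg h c] by blast
  show thesis
  proof (rule that[OF \<epsilon>])
    fix R :: "'a \<Rightarrow> 'a \<Rightarrow> complex" and W W0 :: "'a set"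
    assume RW: "bounded_symmetric_pair R W" and W0: "0 \<in> W0"
      and near: "gap_hat V W < \<epsilon>" "delta_c c Q V R W < \<epsilon>"
    have "0 \<in> V" using \<beta> subspace_0 by blast
    then have "\<forall>u\<in>W. norm u = 1 \<longrightarrow> infdist u V < \<epsilon>"
      using near(1) infdist_less_of_gap by (auto simp: gap_hat_def)
    moreover obtain d where "d < \<epsilon>" "delta_c_admissible c Q V R W d"
      using delta_c_lessE[OF QV RW c near(2)] .
    ultimately have "card E \<le> card B"
      if "finite E" "independent E" "E \<subseteq> W" "\<forall>t\<in>span E. 0 \<le> h * Re (R t t)" for E
      using card_le csubspace_imp_subspace[OF bsp_csubspace[OF RW]] that by blast
    then show "m_plus h R W + cdim_quot (radical R W) W0 \<le> enat n"
      using B(2) by (intro m_plus_add_cdim_quot_radical_le[OF RW W0]) force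
  qed
qed

theorem theorem1p7:
  fixes Q :: "'a::cbanach \<Rightarrow> 'a \<Rightarrow> complex"
    and V V0 \<alpha> \<beta> :: "'a set"
    and h c :: real
  assumes QV: "bounded_symmetric_pair Q V"
    and V0: "closed_csubspace V0" "V0 \<subseteq> radical Q V"
    and h: "h \<in> {1, -1}"
    and c: "c \<ge> 0"
    and \<alpha>: "closed_csubspace \<alpha>" "\<alpha> \<subseteq> V" "\<forall>x\<in>\<alpha>. h * Re (Q x x) \<ge> 0"
    and \<beta>: "closed_csubspace \<beta>" "\<beta> \<subseteq> V" "\<forall>x\<in>\<beta> - {0}. h * Re (Q x x) < 0"
    and V0_eq: "V0 = radical Q \<beta>"
    and gamma_pos: "gamma Q \<beta> > 0"
    and dsum: "V = {a + b | a b. a \<in> \<alpha> \<and> b \<in> \<beta>}" "\<alpha> \<inter> \<beta> = {0}"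
    and orth: "\<forall>a\<in>\<alpha>. \<forall>b\<in>\<beta>. Q a b = 0"
  shows "\<exists>\<epsilon>>0. \<forall>R W W0.
           bounded_symmetric_pair R W \<and> closed_csubspace W0 \<and> W0 \<subseteq> radical R W \<and>
           gap_hat V W < \<epsilon> \<and> gap V0 W0 < \<epsilon> \<and> delta_c c Q V R W < \<epsilon>
           \<longrightarrow> m_plus h R W + cdim_quot (radical R W) W0 \<le> cdim \<alpha>"
proof (cases "cdim \<alpha>")
  case infinity
  then show ?thesis by (intro exI[of _ 1]) auto
next
  case (enat n)
  \<comment> \<open>Definiteness gives \<open>V0 = {0}\<close>, so the condition on \<open>gap V0 W0\<close> is void.\<close>
  have h1: "\<bar>h\<bar> = 1" using h by auto
  have \<beta>c: "csubspace \<beta>" using \<beta>(1) by (simp add: closed_csubspace_def)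
  obtain g where g: "0 < g" "\<forall>b\<in>\<beta>. h * Re (Q b b) \<le> - g * (norm b)\<^sup>2"
    using negative_definite_quadratic_bound[OF QV \<beta>c \<beta>(2) h1 \<beta>(3) gamma_pos] .
  obtain B where B: "finite B" "card B \<le> 2 * n" "\<alpha> \<subseteq> span B"
    using cdim_eq_enat_spanE[OF enat] .
  obtain \<epsilon> where "0 < \<epsilon>"
    and m_plus_le: "\<And>R W W0. bounded_symmetric_pair R W \<Longrightarrow> 0 \<in> W0 \<Longrightarrow>
      gap_hat V W < \<epsilon> \<Longrightarrow> delta_c c Q V R W < \<epsilon> \<Longrightarrow>
      m_plus h R W + cdim_quot (radical R W) W0 \<le> enat n"
    using m_plus_le_near_decomposition[where Q = Q, OF B csubspace_imp_subspace[OF \<beta>c] \<beta>(2)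
        equalityD1[OF dsum(1)] QV g h1 c] by blast
  show ?thesis
    unfolding enat
    using \<open>0 < \<epsilon>\<close> m_plus_le by (auto simp: closed_csubspace_def csubspace_def)
qed

end
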